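(* In the calculus $\lambda^{RE}$ described in the context, parallel reduction is a backward simulation: if $e_1\Rrightarrow e_2$ and $e_2\to e_2'$, then there exists $e_1'$ such that $e_1\to^*e_1'$ and $e_1'\Rrightarrow e_2'$.
   Context: Syntax of $\lambda^{RE}$. Basic types $b ::= \mathsf{Bool}\mid\mathsf{Unit}$. Constants $c ::= \mathsf{true}\mid\mathsf{false}\mid\mathsf{unit}\mid (=_b)\mid (=_{(c,b)})$. Expressions $e ::= c\mid x\mid e\ e\mid \lambda x{:}\tau.\,e\mid \mathsf{BEq}_b\ e\ e\ e\mid \mathsf{XEq}_{x:\tau\to\tau}\ e\ e\ e$. Values $v ::= c\mid \lambda x{:}\tau.\,e\mid \mathsf{BEq}_b\ e\ e\ v\mid \mathsf{XEq}_{x:\tau\to\tau}\ e\ e\ v$. Types $\tau ::= \{x{:}b\mid e\}\mid x{:}\tau\to\tau\mid \mathsf{PEq}_{\tau}\{e\}\{e\}$. $e[x:=e']$ is capture-avoiding substitution. Reduction: evaluation contexts $E ::= \bullet\mid E\ e\mid v\ E\mid \mathsf{BEq}_b\ e\ e\ E\mid\mathsf{XEq}_{x:\tau\to\tau}\ e\ e\ E$; $E[e]\to E[e']$ if $e\to e'$; $(\lambda x{:}\tau.\,e)\ v\to e[x:=v]$; $(=_b)\ c_1\to(=_{(c_1,b)})$; $(=_{(c_1,b)})\ c_2\to\mathsf{true}$ if $c_1,c_2$ syntactically equal, else $\to\mathsf{false}$. $\to^*$ is the reflexive–transitive closure. Parallel reduction $e\Rrightarrow e'$ and $\tau\Rrightarrow\tau'$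 is defined inductively: $x\Rrightarrow x$; $c\Rrightarrow c$; $\lambda x{:}\tau.e\Rrightarrow\lambda x{:}\tau'.e'$ if $\tau\Rrightarrow\tau'$, $e\Rrightarrow e'$; $e_1\ e_2\Rrightarrow e_1'\ e_2'$ if $e_i\Rrightarrow e_i'$; $(\lambda x{:}\tau.e)\ v\Rrightarrow e'[x:=v']$ if $e\Rrightarrow e'$ and $v\Rrightarrow v'$; $(=_b)\ c_1\Rrightarrow(=_{(c_1,b)})$; $(=_{(c_1,b)})\ c_2\Rrightarrow d$ where $d=\mathsf{true}$ if $c_1,c_2$ are syntactically equal and $\mathsf{false}$ otherwise; $\mathsf{BEq}_b\ e_l\ e_r\ e\Rrightarrow\mathsf{BEq}_b\ e_l'\ e_r'\ e'$ if $e_l\Rrightarrow e_l'$, $e_r\Rrightarrow e_r'$, $e\Rrightarrow e'$; $\mathsf{XEq}_{x:\tau_x\to\tau}\ e_l\ e_r\ e\Rrightarrow\mathsf{XEq}_{x:\tau_x'\to\tau'}\ e_l'\ e_r'\ e'$ if all five components parallel reduce; on types: $\{x{:}b\mid r\}\Rrightarrow\{x{:}b\mid r'\}$ if $r\Rrightarrow r'$; $x{:}\tau_x\to\tau\Rrightarrow x{:}\tau_x'\to\tau'$ if $\tau_x\Rrightarrow\tau_x'$, $\tau\Rrightarrow\tau'$; $\mathsf{PEq}_\tau\{e_l\}\{e_r\}\Rrightarrow\mathsf{PEq}_{\tau'}\{e_l'\}\{e_r'\}$ if all components parallel reduce. *)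

theory Defs
  imports Main
begin

text \<open>Binders: Lam T e binds in e; TRef b e binds in e; TArr Tx T binds in T;
  XEq Tx T el er e binds in T only (the codomain of the annotation x:Tx -> T).\<close>

datatype bty = BBool | BUnit

datatype const = CTrue | CFalse | CUnit | CEq bty | CEq2 const bty

datatype expr =
    Const const
  | Var nat
  | App expr expr
  | Lam ty expr
  | BEq bty expr expr expr
  | XEq ty ty expr expr expr
and ty =
    TRef bty expr
  | TArr ty ty
  | TPEq ty expr expr

primrec lift_e :: "nat \<Rightarrow> expr \<Rightarrow> expr"
  and lift_t :: "nat \<Rightarrow> ty \<Rightarrow> ty" where
  "lift_e k (Const c) = Const c"
| "lift_e k (Var i) = (if i < k then Var i else Var (Suc i))"
| "lift_e k (App e1 e2) = App (lift_e k e1) (lift_e k e2)"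
| "lift_e k (Lam T e) = Lam (lift_t k T) (lift_e (Suc k) e)"
| "lift_e k (BEq b el er e) = BEq b (lift_e k el) (lift_e k er) (lift_e k e)"
| "lift_e k (XEq Tx T el er e) =
     XEq (lift_t k Tx) (lift_t (Suc k) T) (lift_e k el) (lift_e k er) (lift_e k e)"
| "lift_t k (TRef b r) = TRef b (lift_e (Suc k) r)"
| "lift_t k (TArr Tx T) = TArr (lift_t k Tx) (lift_t (Suc k) T)"
| "lift_t k (TPEq T el er) = TPEq (lift_t k T) (lift_e k el) (lift_e k er)"

primrec subst_e :: "nat \<Rightarrow> expr \<Rightarrow> expr \<Rightarrow> expr"
  and subst_t :: "nat \<Rightarrow> expr \<Rightarrow> ty \<Rightarrow> ty" where
  "subst_e k s (Const c) = Const c"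
| "subst_e k s (Var i) = (if i < k then Var i else if i = k then s else Var (i - 1))"
| "subst_e k s (App e1 e2) = App (subst_e k s e1) (subst_e k s e2)"
| "subst_e k s (Lam T e) = Lam (subst_t k s T) (subst_e (Suc k) (lift_e 0 s) e)"
| "subst_e k s (BEq b el er e) = BEq b (subst_e k s el) (subst_e k s er) (subst_e k s e)"
| "subst_e k s (XEq Tx T el er e) =
     XEq (subst_t k s Tx) (subst_t (Suc k) (lift_e 0 s) T)
         (subst_e k s el) (subst_e k s er) (subst_e k s e)"
| "subst_t k s (TRef b r) = TRef b (subst_e (Suc k) (lift_e 0 s) r)"
| "subst_t k s (TArr Tx T) = TArr (subst_t k s Tx) (subst_t (Suc k) (lift_e 0 s) T)"
| "subst_t k s (TPEq T el er) = TPEq (subst_t k s T) (subst_e k s el) (subst_e k s er)"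

definition inst :: "expr \<Rightarrow> expr \<Rightarrow> expr" where
  "inst e v = subst_e 0 v e"

fun is_val :: "expr \<Rightarrow> bool" where
  "is_val (Const c) = True"
| "is_val (Lam T e) = True"
| "is_val (BEq b el er v) = is_val v"
| "is_val (XEq Tx T el er v) = is_val v"
| "is_val _ = False"

definition eq_result :: "const \<Rightarrow> const \<Rightarrow> expr" where
  "eq_result c1 c2 = (if c1 = c2 then Const CTrue else Const CFalse)"

text \<open>Small-step reduction (evaluation contexts unfolded).\<close>
inductive step :: "expr \<Rightarrow> expr \<Rightarrow> bool" (infix "\<longmapsto>" 50) where
  s_app1: "e1 \<longmapsto> e1' \<Longrightarrow> App e1 e2 \<longmapsto> App e1' e2"
| s_app2: "is_val v \<Longrightarrow> e \<longmapsto> e' \<Longrightarrow> App v e \<longmapsto> App v e'"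
| s_beq: "e \<longmapsto> e' \<Longrightarrow> BEq b el er e \<longmapsto> BEq b el er e'"
| s_xeq: "e \<longmapsto> e' \<Longrightarrow> XEq Tx T el er e \<longmapsto> XEq Tx T el er e'"
| s_beta: "is_val v \<Longrightarrow> App (Lam T e) v \<longmapsto> inst e v"
| s_eq1: "App (Const (CEq b)) (Const c1) \<longmapsto> Const (CEq2 c1 b)"
| s_eq2: "App (Const (CEq2 c1 b)) (Const c2) \<longmapsto> eq_result c1 c2"

inductive par_e :: "expr \<Rightarrow> expr \<Rightarrow> bool" (infix "\<Rrightarrow>" 50)
  and par_t :: "ty \<Rightarrow> ty \<Rightarrow> bool" (infix "\<Rrightarrow>\<^sub>t" 50) where
  p_var: "Var x \<Rrightarrow> Var x"
| p_const: "Const c \<Rrightarrow> Const c"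
| p_lam: "T \<Rrightarrow>\<^sub>t T' \<Longrightarrow> e \<Rrightarrow> e' \<Longrightarrow> Lam T e \<Rrightarrow> Lam T' e'"
| p_app: "e1 \<Rrightarrow> e1' \<Longrightarrow> e2 \<Rrightarrow> e2' \<Longrightarrow> App e1 e2 \<Rrightarrow> App e1' e2'"
| p_beta: "e \<Rrightarrow> e' \<Longrightarrow> is_val v \<Longrightarrow> v \<Rrightarrow> v' \<Longrightarrow> App (Lam T e) v \<Rrightarrow> inst e' v'"
| p_eq1: "App (Const (CEq b)) (Const c1) \<Rrightarrow> Const (CEq2 c1 b)"
| p_eq2: "App (Const (CEq2 c1 b)) (Const c2) \<Rrightarrow> eq_result c1 c2"
| p_beq: "el \<Rrightarrow> el' \<Longrightarrow> er \<Rrightarrow> er' \<Longrightarrow> e \<Rrightarrow> e' \<Longrightarrow> BEq b el er e \<Rrightarrow> BEq b el' er' e'"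
| p_xeq: "Tx \<Rrightarrow>\<^sub>t Tx' \<Longrightarrow> T \<Rrightarrow>\<^sub>t T' \<Longrightarrow> el \<Rrightarrow> el' \<Longrightarrow> er \<Rrightarrow> er' \<Longrightarrow> e \<Rrightarrow> e'
          \<Longrightarrow> XEq Tx T el er e \<Rrightarrow> XEq Tx' T' el' er' e'"
| p_tref: "r \<Rrightarrow> r' \<Longrightarrow> TRef b r \<Rrightarrow>\<^sub>t TRef b r'"
| p_tarr: "Tx \<Rrightarrow>\<^sub>t Tx' \<Longrightarrow> T \<Rrightarrow>\<^sub>t T' \<Longrightarrow> TArr Tx T \<Rrightarrow>\<^sub>t TArr Tx' T'"
| p_tpeq: "T \<Rrightarrow>\<^sub>t T' \<Longrightarrow> el \<Rrightarrow> el' \<Longrightarrow> er \<Rrightarrow> er' \<Longrightarrow> TPEq T el er \<Rrightarrow>\<^sub>t TPEq T' el' er'"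

end

theory Submission
  imports Defs
begin

(* The interesting case is a parallel beta-step App (Lam T e) v => inst e' v'. The source
   takes one step to inst e v, which parallel-reduces to inst e' v'; but inst e v is not a
   subterm of the source, so a plain induction on the parallel reduction breaks down.
   We therefore prove the simulation for all instances substs e ps => substs e' qs, where
   ps and qs are substitutions by values with ps => qs pointwise; the beta-case then
   becomes the induction hypothesis for e under substitutions extended by v and v'.
   Positions of evaluation contexts that demand a value, and head redexes, are handled
   by the companion fact that a term parallel-reducing to a value reduces to a value
   that parallel-reduces to it. *)

lemma lift_lift:
  "i \<le> k \<Longrightarrow> lift_e (Suc k) (lift_e i t) = lift_e i (lift_e k t)"
  "i \<le> k \<Longrightarrow> lift_t (Suc k) (lift_t i T) = lift_t i (lift_t k T)"
  by (induct t and T arbitrary: i k and i k) auto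

lemma lift_subst_ge:
  "j \<le> i \<Longrightarrow> lift_e i (subst_e j s t) = subst_e j (lift_e i s) (lift_e (Suc i) t)"
  "j \<le> i \<Longrightarrow> lift_t i (subst_t j s T) = subst_t j (lift_e i s) (lift_t (Suc i) T)"
  by (induct t and T arbitrary: i j s and i j s) (auto simp add: lift_lift)

lemma lift_subst_le:
  "i \<le> j \<Longrightarrow> lift_e i (subst_e j s t) = subst_e (Suc j) (lift_e i s) (lift_e i t)"
  "i \<le> j \<Longrightarrow> lift_t i (subst_t j s T) = subst_t (Suc j) (lift_e i s) (lift_t i T)"
  by (induct t and T arbitrary: i j s and i j s) (auto simp add: lift_lift)

lemma subst_lift [simp]:
  "subst_e k s (lift_e k t) = t"
  "subst_t k s (lift_t k T) = T"
  by (induct t and T arbitrary: k s and k s) simp_all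

lemma subst_subst:
  "i \<le> j \<Longrightarrow>
     subst_e i (subst_e j v u) (subst_e (Suc j) (lift_e i v) t) = subst_e j v (subst_e i u t)"
  "i \<le> j \<Longrightarrow>
     subst_t i (subst_e j v u) (subst_t (Suc j) (lift_e i v) T) = subst_t j v (subst_t i u T)"
  by (induct t and T arbitrary: i j u v and i j u v)
    (auto simp add: lift_lift [symmetric] lift_subst_le)

lemma is_val_lift [simp]: "is_val (lift_e k e) = is_val e"
  by (induct e arbitrary: k) auto

lemma is_val_subst: "is_val e \<Longrightarrow> is_val (subst_e k s e)"
  by (induct e arbitrary: k s) auto

lemma is_val_eq_result [simp]: "is_val (eq_result c1 c2)"
  by (simp add: eq_result_def)

lemma lift_subst_eq_result [simp]:
  "lift_e k (eq_result c1 c2) = eq_result c1 c2"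
  "subst_e k s (eq_result c1 c2) = eq_result c1 c2"
  by (auto simp: eq_result_def)

lemma is_val_no_step: "v \<longmapsto> e \<Longrightarrow> \<not> is_val v"
  by (induct rule: step.induct) auto

lemma Var_no_step: "\<not> Var i \<longmapsto> e"
  by (auto elim: step.cases)

lemma App_step_cases:
  assumes "App x y \<longmapsto> z"
  obtains (left) x' where "x \<longmapsto> x'" "z = App x' y"
    | (right) y' where "is_val x" "y \<longmapsto> y'" "z = App x y'"
    | (head) "is_val x" "is_val y"
  using assms by (cases rule: step.cases) auto

lemma BEq_stepE:
  assumes "BEq b el er e \<longmapsto> z"
  obtains e' where "e \<longmapsto> e'" "z = BEq b el er e'"
  using assms by (cases rule: step.cases) auto

lemma XEq_stepE:
  assumes "XEq Tx T el er e \<longmapsto> z"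
  obtains e' where "e \<longmapsto> e'" "z = XEq Tx T el er e'"
  using assms by (cases rule: step.cases) auto

lemma steps_App_left: "step\<^sup>*\<^sup>* a a' \<Longrightarrow> step\<^sup>*\<^sup>* (App a b) (App a' b)"
  by (induct rule: rtranclp_induct) (auto intro: rtranclp.rtrancl_into_rtrancl step.intros)

lemma steps_App_right: "step\<^sup>*\<^sup>* b b' \<Longrightarrow> is_val a \<Longrightarrow> step\<^sup>*\<^sup>* (App a b) (App a b')"
  by (induct rule: rtranclp_induct) (auto intro: rtranclp.rtrancl_into_rtrancl step.intros)

lemma steps_App:
  "step\<^sup>*\<^sup>* a a' \<Longrightarrow> is_val a' \<Longrightarrow> step\<^sup>*\<^sup>* b b' \<Longrightarrow> step\<^sup>*\<^sup>* (App a b) (App a' b')"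
  by (meson rtranclp_trans steps_App_left steps_App_right)

lemma steps_BEq: "step\<^sup>*\<^sup>* e e' \<Longrightarrow> step\<^sup>*\<^sup>* (BEq b el er e) (BEq b el er e')"
  by (induct rule: rtranclp_induct) (auto intro: rtranclp.rtrancl_into_rtrancl step.intros)

lemma steps_XEq: "step\<^sup>*\<^sup>* e e' \<Longrightarrow> step\<^sup>*\<^sup>* (XEq Tx T el er e) (XEq Tx T el er e')"
  by (induct rule: rtranclp_induct) (auto intro: rtranclp.rtrancl_into_rtrancl step.intros)

lemma par_refl: "e \<Rrightarrow> e" "T \<Rrightarrow>\<^sub>t T"
  by (induct e and T) (auto intro: par_e_par_t.intros)

lemma par_lift:
  "e \<Rrightarrow> e' \<Longrightarrow> lift_e k e \<Rrightarrow> lift_e k e'"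
  "T \<Rrightarrow>\<^sub>t T' \<Longrightarrow> lift_t k T \<Rrightarrow>\<^sub>t lift_t k T'"
proof (induct arbitrary: k and k rule: par_e_par_t.inducts)
  case (p_beta e e' v v' T)
  have "lift_e k (inst e' v') = inst (lift_e (Suc k) e') (lift_e k v')"
    unfolding inst_def by (simp add: lift_subst_ge)
  then show ?case using p_beta by (auto intro: par_e_par_t.intros)
qed (auto intro: par_e_par_t.intros)

lemma par_subst:
  "e \<Rrightarrow> e' \<Longrightarrow> s \<Rrightarrow> s' \<Longrightarrow> subst_e k s e \<Rrightarrow> subst_e k s' e'"
  "T \<Rrightarrow>\<^sub>t T' \<Longrightarrow> s \<Rrightarrow> s' \<Longrightarrow> subst_t k s T \<Rrightarrow>\<^sub>t subst_t k s' T'"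
proof (induct arbitrary: k s s' and k s s' rule: par_e_par_t.inducts)
  case (p_beta e e' v v' T)
  have "subst_e k s' (inst e' v') = inst (subst_e (Suc k) (lift_e 0 s') e') (subst_e k s' v')"
    unfolding inst_def by (simp add: subst_subst(1)[symmetric])
  then show ?case using p_beta by (simp add: is_val_subst par_lift par_e_par_t.p_beta)
qed (auto intro!: par_e_par_t.intros simp: par_lift)

lemma par_inst: "e \<Rrightarrow> e' \<Longrightarrow> v \<Rrightarrow> v' \<Longrightarrow> inst e v \<Rrightarrow> inst e' v'"
  unfolding inst_def by (rule par_subst)

lemma par_is_val: "v \<Rrightarrow> v' \<Longrightarrow> is_val v \<Longrightarrow> is_val v'"
  by (induct rule: par_e_par_t.inducts(1)[where ?P2.0 = "\<lambda>_ _. True"]) auto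

lemma par_Var: "Var i \<Rrightarrow> e \<Longrightarrow> e = Var i"
  by (cases rule: par_e.cases) auto

lemma is_val_par_Lam: "w \<Rrightarrow> Lam T e \<Longrightarrow> is_val w \<Longrightarrow> \<exists>T0 e0. w = Lam T0 e0 \<and> e0 \<Rrightarrow> e"
  by (cases rule: par_e.cases) (auto simp: inst_def)

lemma is_val_par_Const: "w \<Rrightarrow> Const c \<Longrightarrow> is_val w \<Longrightarrow> w = Const c"
  by (cases rule: par_e.cases) auto

(* u1 and u2 are values as well, so the step is a head step, which w1 and w2 can mirror. *)
lemma par_values_App_step:
  assumes w1: "w1 \<Rrightarrow> u1" "is_val w1" and w2: "w2 \<Rrightarrow> u2" "is_val w2"
    and step: "App u1 u2 \<longmapsto> z"
  shows "\<exists>z'. App w1 w2 \<longmapsto> z' \<and> z' \<Rrightarrow> z"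
  using step
proof (cases rule: step.cases)
  case (s_beta T e)
  then obtain T0 e0 where "w1 = Lam T0 e0" "e0 \<Rrightarrow> e"
    using is_val_par_Lam w1 by blast
  then show ?thesis
    using s_beta w2 by (auto intro: step.s_beta par_inst)
next
  case (s_eq1 b c1)
  then have "w1 = Const (CEq b)" "w2 = Const c1"
    using w1 w2 is_val_par_Const by simp_all
  then show ?thesis
    using s_eq1 par_refl by (auto intro: step.s_eq1)
next
  case (s_eq2 c1 b c2)
  then have "w1 = Const (CEq2 c1 b)" "w2 = Const c2"
    using w1 w2 is_val_par_Const by simp_all
  then show ?thesis
    using s_eq2 par_refl by (auto intro: step.s_eq2)
qed (use w1 w2 par_is_val is_val_no_step in blast)+

primrec substs :: "expr \<Rightarrow> (nat \<times> expr) list \<Rightarrow> expr" where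
  "substs e [] = e"
| "substs e (p # ps) = substs (subst_e (fst p) (snd p) e) ps"

primrec substs_t :: "ty \<Rightarrow> (nat \<times> expr) list \<Rightarrow> ty" where
  "substs_t T [] = T"
| "substs_t T (p # ps) = substs_t (subst_t (fst p) (snd p) T) ps"

definition shift_substs :: "(nat \<times> expr) list \<Rightarrow> (nat \<times> expr) list" where
  "shift_substs ps = map (\<lambda>p. (Suc (fst p), lift_e 0 (snd p))) ps"

definition extend_substs :: "expr \<Rightarrow> (nat \<times> expr) list \<Rightarrow> (nat \<times> expr) list" where
  "extend_substs v ps = shift_substs ps @ [(0, substs v ps)]"

definition val_substs :: "(nat \<times> expr) list \<Rightarrow> bool" where
  "val_substs ps \<longleftrightarrow> (\<forall>p\<in>set ps. is_val (snd p))"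

definition par_substs :: "(nat \<times> expr) list \<Rightarrow> (nat \<times> expr) list \<Rightarrow> bool" where
  "par_substs ps qs \<longleftrightarrow> list_all2 (\<lambda>p q. fst p = fst q \<and> snd p \<Rrightarrow> snd q) ps qs"

lemma shift_substs_simps [simp]:
  "shift_substs [] = []"
  "shift_substs (p # ps) = (Suc (fst p), lift_e 0 (snd p)) # shift_substs ps"
  by (auto simp: shift_substs_def)

lemma substs_simps [simp]:
  "substs (Const c) ps = Const c"
  "substs (App a b) ps = App (substs a ps) (substs b ps)"
  "substs (Lam T b) ps = Lam (substs_t T ps) (substs b (shift_substs ps))"
  "substs (BEq bt el er e) ps = BEq bt (substs el ps) (substs er ps) (substs e ps)"
  "substs (XEq Tx T el er e) ps =
     XEq (substs_t Tx ps) (substs_t T (shift_substs ps)) (substs el ps) (substs er ps) (substs e ps)"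
  by (induct ps arbitrary: a b T el er e Tx) auto

lemma substs_eq_result [simp]: "substs (eq_result c1 c2) ps = eq_result c1 c2"
  by (induct ps) auto

lemma substs_append [simp]: "substs e (ps @ qs) = substs (substs e ps) qs"
  by (induct ps arbitrary: e) auto

lemma substs_inst: "substs (inst e v) ps = substs e (extend_substs v ps)"
proof -
  have "substs (subst_e 0 v e) ps = subst_e 0 (substs v ps) (substs e (shift_substs ps))"
    by (induct ps arbitrary: e v) (auto simp: subst_subst(1)[symmetric])
  then show ?thesis
    by (simp add: inst_def extend_substs_def)
qed

lemma is_val_substs: "is_val e \<Longrightarrow> is_val (substs e ps)"
  by (induct ps arbitrary: e) (auto simp: is_val_subst)

lemma substs_beta_step:
  "is_val v \<Longrightarrow> substs (App (Lam T e) v) ps \<longmapsto> substs e (extend_substs v ps)"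
  using step.s_beta is_val_substs by (simp add: extend_substs_def inst_def)

lemma substs_Var_cases:
  "val_substs ps \<Longrightarrow> (\<exists>j. substs (Var i) ps = Var j) \<or> is_val (substs (Var i) ps)"
proof (induct ps arbitrary: i)
  case (Cons p ps)
  then show ?case
    by (cases "i < fst p"; cases "i = fst p") (auto simp: val_substs_def is_val_substs)
qed auto

lemma val_substs_par: "par_substs ps qs \<Longrightarrow> val_substs ps \<Longrightarrow> val_substs qs"
  unfolding par_substs_def val_substs_def
  by (induct rule: list_all2_induct) (auto intro: par_is_val)

lemma par_substs_shift: "par_substs ps qs \<Longrightarrow> par_substs (shift_substs ps) (shift_substs qs)"
  unfolding par_substs_def shift_substs_def list_all2_map1 list_all2_map2
  by (auto elim: list_all2_mono intro: par_lift)

lemma par_substs_substs: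
  "par_substs ps qs \<Longrightarrow> e \<Rrightarrow> e' \<Longrightarrow> substs e ps \<Rrightarrow> substs e' qs"
  "par_substs ps qs \<Longrightarrow> T \<Rrightarrow>\<^sub>t T' \<Longrightarrow> substs_t T ps \<Rrightarrow>\<^sub>t substs_t T' qs"
  unfolding par_substs_def
  subgoal by (induct ps qs arbitrary: e e' rule: list_all2_induct) (auto intro: par_subst)
  subgoal by (induct ps qs arbitrary: T T' rule: list_all2_induct) (auto intro: par_subst)
  done

lemma par_substs_extend:
  "par_substs ps qs \<Longrightarrow> v \<Rrightarrow> v' \<Longrightarrow> par_substs (extend_substs v ps) (extend_substs v' qs)"
  using par_substs_shift par_substs_substs(1)
  by (auto simp: extend_substs_def par_substs_def intro: list_all2_appendI)

lemma val_substs_extend: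
  "val_substs ps \<Longrightarrow> is_val v \<Longrightarrow> val_substs (extend_substs v ps)"
  by (auto simp: extend_substs_def val_substs_def shift_substs_def is_val_substs)

lemma par_substs_value_steps:
  assumes "a \<Rrightarrow> a'" "par_substs ps qs" "val_substs ps" "is_val (substs a' qs)"
  shows "\<exists>w. step\<^sup>*\<^sup>* (substs a ps) w \<and> is_val w \<and> w \<Rrightarrow> substs a' qs"
  using assms
proof (induct arbitrary: ps qs rule: par_e_par_t.inducts(1)[where ?P2.0 = "\<lambda>_ _. True"])
  case (p_var x)
  have par: "substs (Var x) ps \<Rrightarrow> substs (Var x) qs"
    using p_var.prems(1) par_refl(1) by (rule par_substs_substs)
  have "is_val (substs (Var x) ps)"
    using substs_Var_cases[OF p_var.prems(2), of x] par par_Var p_var.prems(3) by force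
  then show ?case using par by blast
next
  case (p_lam T T' e e')
  then have "substs (Lam T e) ps \<Rrightarrow> substs (Lam T' e') qs"
    by (blast intro: par_substs_substs par_e_par_t.p_lam)
  then show ?case by (intro exI[of _ "substs (Lam T e) ps"]) simp
next
  case (p_beta e e' v v' T)
  then obtain w where "step\<^sup>*\<^sup>* (substs e (extend_substs v ps)) w" "is_val w"
      "w \<Rrightarrow> substs (inst e' v') qs"
    by (metis par_substs_extend val_substs_extend substs_inst)
  then show ?case
    using substs_beta_step[OF p_beta.hyps(3)] by (blast intro: converse_rtranclp_into_rtranclp)
next
  case (p_eq1 b c1)
  show ?case
    by (auto intro!: exI[of _ "Const (CEq2 c1 b)"] r_into_rtranclp step.s_eq1 par_refl)
next
  case (p_eq2 c1 b c2)
  show ?case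
    by (auto intro!: exI[of _ "eq_result c1 c2"] r_into_rtranclp step.s_eq2 par_refl)
next
  case (p_beq el el' er er' e e' b)
  obtain w where "step\<^sup>*\<^sup>* (substs e ps) w" "is_val w" "w \<Rrightarrow> substs e' qs"
    using p_beq.hyps(6)[OF p_beq.prems(1,2)] p_beq.prems(3) by auto
  then show ?case
    using p_beq steps_BEq by (fastforce intro!: par_e_par_t.p_beq par_substs_substs)
next
  case (p_xeq Tx Tx' T T' el el' er er' e e')
  obtain w where "step\<^sup>*\<^sup>* (substs e ps) w" "is_val w" "w \<Rrightarrow> substs e' qs"
    using p_xeq.hyps(10)[OF p_xeq.prems(1,2)] p_xeq.prems(3) by auto
  then show ?case
    using p_xeq steps_XEq
    by (fastforce intro!: par_e_par_t.p_xeq par_substs_substs par_substs_shift)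
qed (auto intro: par_refl)

lemma App_step_backward:
  assumes c: "\<And>z. c' \<longmapsto> z \<Longrightarrow> \<exists>w. step\<^sup>*\<^sup>* c w \<and> w \<Rrightarrow> z"
      "is_val c' \<Longrightarrow> \<exists>w. step\<^sup>*\<^sup>* c w \<and> is_val w \<and> w \<Rrightarrow> c'"
    and d: "\<And>z. d' \<longmapsto> z \<Longrightarrow> \<exists>w. step\<^sup>*\<^sup>* d w \<and> w \<Rrightarrow> z"
      "is_val d' \<Longrightarrow> \<exists>w. step\<^sup>*\<^sup>* d w \<and> is_val w \<and> w \<Rrightarrow> d'" "d \<Rrightarrow> d'"
    and step: "App c' d' \<longmapsto> z"
  shows "\<exists>w. step\<^sup>*\<^sup>* (App c d) w \<and> w \<Rrightarrow> z"
  using step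
proof (cases rule: App_step_cases)
  case (left x')
  then obtain w where "step\<^sup>*\<^sup>* c w" "w \<Rrightarrow> x'"
    using c(1) by blast
  then show ?thesis
    using left d(3) by (auto intro: steps_App_left par_e_par_t.p_app)
next
  case (right y')
  obtain w1 where "step\<^sup>*\<^sup>* c w1" "is_val w1" "w1 \<Rrightarrow> c'"
    using c(2) right(1) by blast
  moreover obtain w2 where "step\<^sup>*\<^sup>* d w2" "w2 \<Rrightarrow> y'"
    using d(1) right(2) by blast
  ultimately show ?thesis
    using right(3) by (auto intro: steps_App par_e_par_t.p_app)
next
  case head
  obtain w1 where w1: "step\<^sup>*\<^sup>* c w1" "is_val w1" "w1 \<Rrightarrow> c'"
    using c(2) head(1) by blast
  obtain w2 where w2: "step\<^sup>*\<^sup>* d w2" "is_val w2" "w2 \<Rrightarrow> d'"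
    using d(2) head(2) by blast
  obtain z' where "App w1 w2 \<longmapsto> z'" "z' \<Rrightarrow> z"
    using par_values_App_step w1(3,2) w2(3,2) step by blast
  then show ?thesis
    using steps_App[OF w1(1,2) w2(1)] by (auto intro: rtranclp.rtrancl_into_rtrancl)
qed

lemma par_substs_step_backward:
  assumes "a \<Rrightarrow> a'" "par_substs ps qs" "val_substs ps" "substs a' qs \<longmapsto> z"
  shows "\<exists>w. step\<^sup>*\<^sup>* (substs a ps) w \<and> w \<Rrightarrow> z"
  using assms
proof (induct arbitrary: ps qs z rule: par_e_par_t.inducts(1)[where ?P2.0 = "\<lambda>_ _. True"])
  case (p_var x)
  then have "val_substs qs"
    by (blast intro: val_substs_par)
  then show ?case
    using substs_Var_cases p_var.prems(3) Var_no_step is_val_no_step by metis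
next
  case (p_app c c' d d')
  note substs = p_app.prems(1,2)
  show ?case
    using p_app.prems(3)
    by (auto intro!: App_step_backward p_app.hyps(2,4)[OF substs] par_substs_substs[OF substs(1)]
        par_substs_value_steps[OF _ substs] p_app.hyps(1,3))
next
  case (p_beta e e' v v' T)
  have "substs e' (extend_substs v' qs) \<longmapsto> z"
    using p_beta.prems(3) by (simp add: substs_inst)
  then obtain w where "step\<^sup>*\<^sup>* (substs e (extend_substs v ps)) w" "w \<Rrightarrow> z"
    using p_beta.hyps(2-4) p_beta.prems(1,2)
    by (meson par_substs_extend val_substs_extend)
  then show ?case
    using substs_beta_step[OF p_beta.hyps(3)] by (blast intro: converse_rtranclp_into_rtranclp)
next
  case (p_beq el el' er er' e e' b)
  from p_beq.prems(3) obtain y where y: "substs e' qs \<longmapsto> y"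
      "z = BEq b (substs el' qs) (substs er' qs) y"
    by (auto elim: BEq_stepE)
  then obtain w where "step\<^sup>*\<^sup>* (substs e ps) w" "w \<Rrightarrow> y"
    using p_beq.hyps(6)[OF p_beq.prems(1,2)] by blast
  then show ?case
    using p_beq y steps_BEq by (fastforce intro!: par_e_par_t.p_beq par_substs_substs)
next
  case (p_xeq Tx Tx' T T' el el' er er' e e')
  from p_xeq.prems(3) obtain y where y: "substs e' qs \<longmapsto> y"
      "z = XEq (substs_t Tx' qs) (substs_t T' (shift_substs qs)) (substs el' qs) (substs er' qs) y"
    by (auto elim: XEq_stepE)
  then obtain w where "step\<^sup>*\<^sup>* (substs e ps) w" "w \<Rrightarrow> y"
    using p_xeq.hyps(10)[OF p_xeq.prems(1,2)] by blast
  then show ?case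
    using p_xeq y steps_XEq
    by (fastforce intro!: par_e_par_t.p_xeq par_substs_substs par_substs_shift)
qed (auto dest: is_val_no_step)

theorem corollaryC15:
  assumes "e1 \<Rrightarrow> e2" and "e2 \<longmapsto> e2'"
  shows "\<exists>e1'. step\<^sup>*\<^sup>* e1 e1' \<and> e1' \<Rrightarrow> e2'"
  using par_substs_step_backward[OF assms(1), of "[]" "[]"] assms(2)
  by (simp add: par_substs_def val_substs_def)

end
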